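(* Let $k\ge1$, let $\mathcal{X}\subset\mathbb{R}^d$ be locally finite, and let $G_k(\mathcal{X})$ be its $k$-nearest-neighbor graph. Let $\mathrm{Cone}_*=\{x\in\mathbb{R}^d:\langle x,\mathbf{1}\rangle/|x|\ge\sqrt3/2\}$ with $\mathbf{1}=(1,0,\dots,0)$, and for each $x\in\mathbb{R}^d$ let $\mathrm{Cone}_1(x),\dots,\mathrm{Cone}_N(x)$ be a fixed finite collection of translated and rotated copies of $\mathrm{Cone}_*$, each with apex $x$, covering $\mathbb{R}^d$. For $x\in\mathcal{X}$ define \[ R(x;\mathcal{X})=2\inf\{r>0:|\mathcal{X}\cap B_r(x)\cap\mathrm{Cone}_i(x)|\ge k+1\ \text{for all }1\le i\le N\}. \] Then $\deg(x;\mathcal{X})=\deg(x;\mathcal{X}\cap B_{R(x;\mathcal{X})}(x))$, and with $K=kN$, $k\le\deg(x;\mathcal{X})\le K$.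
   Context: $G_k(\mathcal{X})$ connects $x_1,x_2\in\mathcal{X}$ if $x_2$ is among the $k$ nearest neighbors of $x_1$ or vice versa; $\deg(x;\mathcal{X})$ is the degree of $x$ in $G_k(\mathcal{X})$. $B_r(x)$ is the closed Euclidean ball. $\mathrm{Cone}_*$ is a cone with apex at the origin and opening angle $\pi/3$. *)

theory Defs
  imports "HOL-Analysis.Analysis"
begin

definition locally_finite_set :: "'a::metric_space set \<Rightarrow> bool" where
  "locally_finite_set X \<longleftrightarrow> (\<forall>S. bounded S \<longrightarrow> finite (X \<inter> S))"

definition is_knn :: "nat \<Rightarrow> 'a::metric_space set \<Rightarrow> 'a \<Rightarrow> 'a \<Rightarrow> bool" where
  "is_knn k X x y \<longleftrightarrow> x \<in> X \<and> y \<in> X \<and> y \<noteq> x \<and>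
     card {z \<in> X - {x}. dist x z < dist x y} < k"

definition knn_adj :: "nat \<Rightarrow> 'a::metric_space set \<Rightarrow> 'a \<Rightarrow> 'a \<Rightarrow> bool" where
  "knn_adj k X x y \<longleftrightarrow> x \<noteq> y \<and> (is_knn k X x y \<or> is_knn k X y x)"

definition knn_deg :: "nat \<Rightarrow> 'a::metric_space set \<Rightarrow> 'a \<Rightarrow> nat" where
  "knn_deg k X x = card {y \<in> X. knn_adj k X x y}"

definition first_axis :: "real^'n" where
  "first_axis = axis (SOME i. True) 1"

text \<open>Cone_*: apex at the origin (included), opening angle pi/3.\<close>
definition cone_star :: "(real^'n) set" where
  "cone_star = {0} \<union> {v. v \<noteq> 0 \<and> inner v first_axis / norm v \<ge> sqrt 3 / 2}"

definition is_rotation :: "(real^'n \<Rightarrow> real^'n) \<Rightarrow> bool" where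
  "is_rotation f \<longleftrightarrow> orthogonal_transformation f \<and> det (matrix f) = 1"

definition cone_at :: "(real^'n \<Rightarrow> real^'n) \<Rightarrow> real^'n \<Rightarrow> (real^'n) set" where
  "cone_at rho x = (\<lambda>v. x + rho v) ` cone_star"

text \<open>R(x;X) as an extended real (infimum of the empty set is +infinity).\<close>
definition knn_R :: "nat \<Rightarrow> nat \<Rightarrow> (nat \<Rightarrow> real^'n \<Rightarrow> real^'n) \<Rightarrow> (real^'n) set \<Rightarrow> real^'n \<Rightarrow> ereal" where
  "knn_R k N rho X x = 2 * Inf {ereal r | r. r > 0 \<and>
      (\<forall>i\<in>{1..N}. k + 1 \<le> card (X \<inter> cball x r \<inter> cone_at (rho i) x))}"

definition ecball :: "'a::metric_space \<Rightarrow> ereal \<Rightarrow> 'a set" where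
  "ecball x R = {y. ereal (dist x y) \<le> R}"

end

theory Submission
  imports Defs
begin

(*
  A point z of a cone Cone_i(x) that is closer to x than another point y of the same cone is
  also closer to y than x is: the two vectors from x make an angle of at most pi/3.  So k
  points of X in the cone of y that are closer to x than y rule out the edge xy in both
  directions.  With pairwise distinct distances from x this leaves at most k neighbours of x
  per cone, hence deg <= kN.  It also shows that no y with |x - y| > R/2 is adjacent to x,
  in X or in X intersected with B_R(x), while for |x - y| <= R/2 adjacency only involves
  points within 2|x - y| <= R of x.  The k nearest neighbours of x give deg >= k.
*)

lemma inner_ge_axis_decomposition:
  fixes e v w :: "'a::real_inner"
  assumes "norm e = 1"
  shows "(v \<bullet> e) * (w \<bullet> e) - norm (v - (v \<bullet> e) *\<^sub>R e) * norm (w - (w \<bullet> e) *\<^sub>R e) \<le> v \<bullet> w"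
proof -
  define p q where "p = v - (v \<bullet> e) *\<^sub>R e" and "q = w - (w \<bullet> e) *\<^sub>R e"
  have "e \<bullet> e = 1" using assms by (simp add: dot_square_norm)
  then have "v \<bullet> w = (v \<bullet> e) * (w \<bullet> e) + p \<bullet> q"
    by (simp add: p_def q_def inner_diff_left inner_diff_right inner_commute algebra_simps)
  moreover have "\<bar>p \<bullet> q\<bar> \<le> norm p * norm q"
    by (rule Cauchy_Schwarz_ineq2)
  ultimately show ?thesis
    unfolding p_def[symmetric] q_def[symmetric] by linarith
qed

lemma norm_reject_unit_sq:
  fixes e v :: "'a::real_inner"
  assumes "norm e = 1"
  shows "(norm (v - (v \<bullet> e) *\<^sub>R e))\<^sup>2 = (norm v)\<^sup>2 - (v \<bullet> e)\<^sup>2"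
proof -
  have "e \<bullet> e = 1" using assms by (simp add: dot_square_norm)
  then show ?thesis
    unfolding power2_norm_eq_inner
    by (simp add: inner_diff_left inner_diff_right inner_commute algebra_simps power2_eq_square)
qed

lemma norm_first_axis [simp]: "norm (first_axis :: real^'n) = 1"
  by (simp add: first_axis_def)

lemma mem_cone_star_iff: "v \<in> cone_star \<longleftrightarrow> sqrt 3 / 2 * norm v \<le> v \<bullet> first_axis"
  by (cases "v = 0") (auto simp: cone_star_def field_simps)

lemma cone_star_reject_le:
  assumes "v \<in> cone_star"
  shows "norm (v - (v \<bullet> first_axis) *\<^sub>R first_axis) \<le> norm v / 2"
proof -
  have "sqrt 3 / 2 * norm v \<le> v \<bullet> first_axis" using assms by (simp add: mem_cone_star_iff)
  then have "(sqrt 3 / 2 * norm v)\<^sup>2 \<le> (v \<bullet> first_axis)\<^sup>2"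
    by (intro power_mono) auto
  then have "(norm (v - (v \<bullet> first_axis) *\<^sub>R first_axis))\<^sup>2 \<le> (norm v / 2)\<^sup>2"
    by (simp add: norm_reject_unit_sq power_mult_distrib power_divide)
  then show ?thesis by (rule power2_le_imp_le) simp
qed

text \<open>Both vectors are within \<open>\<pi>/6\<close> of the axis, so the cosine of their angle is at least
  \<open>cos (\<pi>/3) = 1/2\<close>: decompose along the axis, \<open>v \<bullet> w \<ge> (3/4 - 1/4) norm v * norm w\<close>.\<close>
lemma cone_star_inner_ge:
  assumes "v \<in> cone_star" "w \<in> cone_star"
  shows "norm v * norm w \<le> 2 * (v \<bullet> w)"
proof -
  let ?e = "first_axis :: real^'a"
  have v: "sqrt 3 / 2 * norm v \<le> v \<bullet> ?e" and w: "sqrt 3 / 2 * norm w \<le> w \<bullet> ?e"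
    using assms by (simp_all add: mem_cone_star_iff)
  have "0 \<le> sqrt 3 / 2 * norm v" by simp
  with v have "0 \<le> v \<bullet> ?e" by linarith
  have "3 / 4 * (norm v * norm w) = (sqrt 3 / 2 * norm v) * (sqrt 3 / 2 * norm w)"
    by (simp add: power2_eq_square[symmetric] power_divide)
  also have "\<dots> \<le> (v \<bullet> ?e) * (w \<bullet> ?e)"
    using v w \<open>0 \<le> v \<bullet> ?e\<close> by (intro mult_mono) auto
  finally have "3 / 4 * (norm v * norm w) \<le> (v \<bullet> ?e) * (w \<bullet> ?e)" .
  moreover have "norm (v - (v \<bullet> ?e) *\<^sub>R ?e) * norm (w - (w \<bullet> ?e) *\<^sub>R ?e) \<le> norm v / 2 * (norm w / 2)"
    using assms by (intro mult_mono cone_star_reject_le) auto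
  moreover have "(v \<bullet> ?e) * (w \<bullet> ?e) - norm (v - (v \<bullet> ?e) *\<^sub>R ?e) * norm (w - (w \<bullet> ?e) *\<^sub>R ?e) \<le> v \<bullet> w"
    by (rule inner_ge_axis_decomposition) simp
  ultimately show ?thesis by linarith
qed

lemma cone_at_inner_ge:
  assumes "is_rotation \<rho>" "y \<in> cone_at \<rho> x" "z \<in> cone_at \<rho> x"
  shows "norm (y - x) * norm (z - x) \<le> 2 * ((y - x) \<bullet> (z - x))"
proof -
  obtain v w where "v \<in> cone_star" "y = x + \<rho> v" "w \<in> cone_star" "z = x + \<rho> w"
    using assms(2,3) unfolding cone_at_def by auto
  moreover have "orthogonal_transformation \<rho>"
    using assms(1) unfolding is_rotation_def by simp
  ultimately show ?thesis
    using cone_star_inner_ge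
    by (simp add: orthogonal_transformation_norm orthogonal_transformation_def)
qed

lemma cone_at_dist_less:
  assumes "is_rotation \<rho>" "y \<in> cone_at \<rho> x" "z \<in> cone_at \<rho> x" "z \<noteq> x"
    and "dist x z < dist x y"
  shows "dist y z < dist y x"
proof -
  define a b where "a = y - x" and "b = z - x"
  have ab: "norm a * norm b \<le> 2 * (a \<bullet> b)"
    using cone_at_inner_ge[OF assms(1-3)] by (simp add: a_def b_def)
  have "0 < norm b" "norm b < norm a"
    using assms(4,5) by (auto simp: a_def b_def dist_norm norm_minus_commute)
  have "(norm (a - b))\<^sup>2 = (norm a)\<^sup>2 + (norm b)\<^sup>2 - 2 * (a \<bullet> b)"
    by (simp add: power2_norm_eq_inner inner_diff_left inner_diff_right inner_commute)
  also have "\<dots> \<le> (norm a)\<^sup>2 - norm b * (norm a - norm b)"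
    using ab by (simp add: power2_eq_square algebra_simps)
  also have "\<dots> < (norm a)\<^sup>2"
    using \<open>0 < norm b\<close> \<open>norm b < norm a\<close> by simp
  finally have "norm (a - b) < norm a"
    by (rule power_less_imp_less_base) simp
  then show ?thesis
    by (simp add: a_def b_def dist_norm norm_minus_commute)
qed

lemma locally_finite_set_subset:
  "locally_finite_set X \<Longrightarrow> Y \<subseteq> X \<Longrightarrow> locally_finite_set Y"
  unfolding locally_finite_set_def by (meson finite_subset inf_mono order_refl)

lemma locally_finite_set_finite_cball:
  assumes "locally_finite_set X"
  shows "finite {z \<in> X. dist x z \<le> r}"
proof -
  have "finite (X \<inter> cball x r)"
    using assms unfolding locally_finite_set_def by simp
  then show ?thesis by (rule finite_subset[rotated]) auto
qed

lemma not_is_knn_if_closer: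
  assumes "locally_finite_set Y" "P \<subseteq> Y - {x}" "\<forall>z\<in>P. dist x z < dist x y" "k \<le> card P"
  shows "\<not> is_knn k Y x y"
proof -
  have "P \<subseteq> {z \<in> Y - {x}. dist x z < dist x y}"
    using assms(2,3) by auto
  moreover have "finite {z \<in> Y - {x}. dist x z < dist x y}"
    by (rule finite_subset[OF _ locally_finite_set_finite_cball[OF assms(1), of x "dist x y"]]) auto
  ultimately have "card P \<le> card {z \<in> Y - {x}. dist x z < dist x y}"
    by (rule card_mono[rotated])
  with assms(4) show ?thesis unfolding is_knn_def by simp
qed

lemma not_knn_adj_if_cone_closer:
  assumes "locally_finite_set Y" "is_rotation \<rho>" "y \<in> cone_at \<rho> x"
    and "P \<subseteq> Y \<inter> cone_at \<rho> x - {x}" "\<forall>z\<in>P. dist x z < dist x y" "k \<le> card P"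
  shows "\<not> knn_adj k Y x y"
proof -
  have "\<not> is_knn k Y x y"
    using not_is_knn_if_closer[OF assms(1)] assms(4-6) by blast
  moreover have closer_to_y: "\<forall>z\<in>P. dist y z < dist y x"
    using cone_at_dist_less[OF assms(2,3)] assms(4,5) by blast
  have "P \<subseteq> Y - {y}"
    using assms(4,5) by auto
  then have "\<not> is_knn k Y y x"
    using not_is_knn_if_closer[OF assms(1) _ closer_to_y assms(6)] by blast
  ultimately show ?thesis unfolding knn_adj_def by blast
qed

lemma not_knn_adj_beyond_cone_radius:
  fixes rho :: "nat \<Rightarrow> real^'n \<Rightarrow> real^'n"
  assumes "locally_finite_set X" "\<forall>i\<in>{1..N}. is_rotation (rho i)"
    and "\<forall>y. (\<Union>i\<in>{1..N}. cone_at (rho i) y) = UNIV"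
    and "\<forall>i\<in>{1..N}. k + 1 \<le> card (X \<inter> cball x r \<inter> cone_at (rho i) x)"
    and "Y \<subseteq> X" "\<forall>z\<in>X. dist x z < dist x y \<longrightarrow> z \<in> Y" "r < dist x y"
  shows "\<not> knn_adj k Y x y"
proof -
  obtain i where i: "i \<in> {1..N}" "y \<in> cone_at (rho i) x"
    using assms(3) by blast
  define P where "P = X \<inter> cball x r \<inter> cone_at (rho i) x - {x}"
  have "k + 1 \<le> card (X \<inter> cball x r \<inter> cone_at (rho i) x)"
    using assms(4) i(1) by blast
  then have "k \<le> card P"
    unfolding P_def using diff_card_le_card_Diff[of "{x}" "X \<inter> cball x r \<inter> cone_at (rho i) x"]
    by simp
  moreover have closer: "\<forall>z\<in>P. dist x z < dist x y"
    using assms(7) by (auto simp: P_def)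
  moreover have "P \<subseteq> Y \<inter> cone_at (rho i) x - {x}"
    using assms(6) closer by (auto simp: P_def)
  ultimately show ?thesis
    using not_knn_adj_if_cone_closer[OF locally_finite_set_subset[OF assms(1,5)] _ i(2)] assms(2) i(1)
    by blast
qed

text \<open>The farthest of \<open>k + 1\<close> neighbours in one cone would have the other \<open>k\<close> strictly closer to
  \<open>x\<close> (distances to \<open>x\<close> are distinct), which forbids its edge.\<close>
lemma card_knn_adj_cone_le:
  assumes "locally_finite_set X" "inj_on (dist x) (X - {x})" "is_rotation \<rho>"
  shows "finite {y \<in> X. knn_adj k X x y \<and> y \<in> cone_at \<rho> x}
    \<and> card {y \<in> X. knn_adj k X x y \<and> y \<in> cone_at \<rho> x} \<le> k"
proof (rule finite_if_finite_subsets_card_bdd)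
  fix G assume G: "G \<subseteq> {y \<in> X. knn_adj k X x y \<and> y \<in> cone_at \<rho> x}" "finite G"
  show "card G \<le> k"
  proof (rule ccontr)
    assume "\<not> card G \<le> k"
    then have "G \<noteq> {}" by auto
    then obtain w where w: "w \<in> G" "\<forall>t\<in>G. dist x t \<le> dist x w"
      using ex_is_arg_min_if_finite[OF G(2), of "\<lambda>t. - dist x t"] by (auto simp: is_arg_min_linorder)
    have GX: "G \<subseteq> X \<inter> cone_at \<rho> x - {x}"
      using G(1) by (auto simp: knn_adj_def)
    have "k \<le> card (G - {w})"
      using \<open>\<not> card G \<le> k\<close> w(1) G(2) by simp
    moreover have "G - {w} \<subseteq> X \<inter> cone_at \<rho> x - {x}"
      using GX by blast
    moreover have "\<forall>t\<in>G - {w}. dist x t < dist x w"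
    proof
      fix t assume t: "t \<in> G - {w}"
      have "t \<in> X - {x}" "w \<in> X - {x}"
        using t w(1) GX by auto
      then have "dist x t \<noteq> dist x w"
        using inj_on_eq_iff[OF assms(2)] t by auto
      moreover have "dist x t \<le> dist x w"
        using w(2) t by blast
      ultimately show "dist x t < dist x w" by simp
    qed
    moreover have "w \<in> cone_at \<rho> x"
      using w(1) GX by blast
    ultimately have "\<not> knn_adj k X x w"
      using not_knn_adj_if_cone_closer[OF assms(1,3)] by blast
    with w(1) G(1) show False by blast
  qed
qed

lemma finite_knn_neighbours_card_le:
  fixes rho :: "nat \<Rightarrow> real^'n \<Rightarrow> real^'n" and X :: "(real^'n) set"
  assumes "locally_finite_set X" "inj_on (dist x) (X - {x})"
    and "\<forall>i\<in>{1..N}. is_rotation (rho i)" "\<forall>y. (\<Union>i\<in>{1..N}. cone_at (rho i) y) = UNIV"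
  shows "finite {y \<in> X. knn_adj k X x y} \<and> card {y \<in> X. knn_adj k X x y} \<le> k * N"
proof -
  let ?S = "\<lambda>i. {y \<in> X. knn_adj k X x y \<and> y \<in> cone_at (rho i) x}"
  have S: "finite (?S i) \<and> card (?S i) \<le> k" if "i \<in> {1..N}" for i
    using card_knn_adj_cone_le[OF assms(1,2)] assms(3) that by blast
  have sub: "{y \<in> X. knn_adj k X x y} \<subseteq> (\<Union>i\<in>{1..N}. ?S i)"
    using assms(4) by blast
  have fin: "finite (\<Union>i\<in>{1..N}. ?S i)"
    using S by auto
  have "card (\<Union>i\<in>{1..N}. ?S i) \<le> (\<Sum>i\<in>{1..N}. card (?S i))"
    by (rule card_UN_le) simp
  also have "\<dots> \<le> (\<Sum>i\<in>{1..N}. k)"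
    using S by (intro sum_mono) auto
  also have "\<dots> = k * N"
    by simp
  finally show ?thesis
    using finite_subset[OF sub fin] card_mono[OF fin sub] by (meson order.trans)
qed

lemma card_rank_less_ge:
  fixes f :: "'a \<Rightarrow> 'b::linorder"
  assumes "finite B" "k \<le> card B"
  shows "k \<le> card {y \<in> B. card {z \<in> B. f z < f y} < k}"
proof (rule ccontr)
  define L where "L = {y \<in> B. card {z \<in> B. f z < f y} < k}"
  assume "\<not> k \<le> card {y \<in> B. card {z \<in> B. f z < f y} < k}"
  then have "card L < k" by (simp add: L_def)
  have "L \<subseteq> B" by (auto simp: L_def)
  then have "finite L" using assms(1) by (rule finite_subset)
  have "B - L \<noteq> {}"
    using \<open>L \<subseteq> B\<close> \<open>card L < k\<close> assms(2) by (metis Diff_eq_empty_iff subset_antisym leD)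
  then obtain u where u: "u \<in> B - L" "\<forall>t\<in>B - L. f u \<le> f t"
    using ex_is_arg_min_if_finite[of "B - L" f] assms(1) by (auto simp: is_arg_min_linorder)
  have "{z \<in> B. f z < f u} \<subseteq> L"
    using u(2) by force
  then have "card {z \<in> B. f z < f u} < k"
    using card_mono[OF \<open>finite L\<close>] \<open>card L < k\<close> by (meson le_less_trans)
  with u(1) show False by (simp add: L_def)
qed

lemma card_is_knn_ge:
  assumes "locally_finite_set X" "x \<in> X" "infinite X \<or> k < card X"
  shows "k \<le> card {y. is_knn k X x y}"
proof -
  obtain F where F: "F \<subseteq> X - {x}" "finite F" "card F = k"
  proof (cases "finite X")
    case True
    with assms(2,3) have "k \<le> card (X - {x})" by simp
    then show ?thesis using obtain_subset_with_card_n that by (metis card.infinite not_less_zero)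
  next
    case False
    then show ?thesis using infinite_arbitrarily_large[of "X - {x}" k] that by auto
  qed
  define r where "r = Max (insert 0 (dist x ` F))"
  define B where "B = {z \<in> X - {x}. dist x z \<le> r}"
  have "finite B"
    using locally_finite_set_finite_cball[OF assms(1), of x r] by (rule finite_subset[rotated]) (auto simp: B_def)
  have F_le_r: "\<forall>z\<in>F. dist x z \<le> r"
    using F(2) by (simp add: r_def)
  then have "F \<subseteq> B" using F(1) by (auto simp: B_def)
  then have "k \<le> card B"
    using card_mono[OF \<open>finite B\<close>] F(3) by blast
  have closer: "{z \<in> X - {x}. dist x z < dist x y} = {z \<in> B. dist x z < dist x y}" if "y \<in> B" for y
    using that by (auto simp: B_def)
  have "is_knn k X x y \<longleftrightarrow> y \<in> B \<and> card {z \<in> B. dist x z < dist x y} < k" for y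
  proof
    assume y: "is_knn k X x y"
    have "y \<in> B"
    proof (rule ccontr)
      assume "y \<notin> B"
      with y have "\<forall>z\<in>F. dist x z < dist x y"
        using F_le_r by (force simp: B_def is_knn_def)
      then show False
        using not_is_knn_if_closer[OF assms(1) F(1)] F(3) y by blast
    qed
    with y closer show "y \<in> B \<and> card {z \<in> B. dist x z < dist x y} < k"
      by (simp add: is_knn_def)
  next
    assume "y \<in> B \<and> card {z \<in> B. dist x z < dist x y} < k"
    with closer assms(2) show "is_knn k X x y"
      by (simp add: is_knn_def B_def)
  qed
  then have "{y. is_knn k X x y} = {y \<in> B. card {z \<in> B. dist x z < dist x y} < k}"
    by blast
  with card_rank_less_ge[OF \<open>finite B\<close> \<open>k \<le> card B\<close>] show ?thesis
    by simp
qed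

lemma knn_adj_restrict_iff:
  fixes X Y :: "'a::metric_space set"
  assumes "Y \<subseteq> X" "x \<in> Y" "y \<in> Y" "\<forall>z\<in>X. dist x z \<le> 2 * dist x y \<longrightarrow> z \<in> Y"
  shows "knn_adj k Y x y \<longleftrightarrow> knn_adj k X x y"
proof -
  have "dist x z \<le> 2 * dist x y" if "dist x z < dist x y" for z
    using that zero_le_dist[of x y] by linarith
  then have "{z \<in> Y - {x}. dist x z < dist x y} = {z \<in> X - {x}. dist x z < dist x y}"
    using assms(1,4) by blast
  moreover have "{z \<in> Y - {y}. dist y z < dist y x} = {z \<in> X - {y}. dist y z < dist y x}"
  proof -
    have "dist x z \<le> 2 * dist x y" if "dist y z < dist y x" for z
      using dist_triangle[of x z y] that by (simp add: dist_commute)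
    then show ?thesis using assms(1,4) by blast
  qed
  ultimately show ?thesis
    using assms(1-3) unfolding knn_adj_def is_knn_def by auto
qed

lemma knn_deg_restrict_ecball_knn_R:
  fixes rho :: "nat \<Rightarrow> real^'n \<Rightarrow> real^'n"
  assumes "locally_finite_set X" "\<forall>i\<in>{1..N}. is_rotation (rho i)"
    and "\<forall>y. (\<Union>i\<in>{1..N}. cone_at (rho i) y) = UNIV" "x \<in> X"
  shows "knn_deg k X x = knn_deg k (X \<inter> ecball x (knn_R k N rho X x)) x"
proof -
  define I where "I = Inf {ereal r | r. r > 0 \<and>
      (\<forall>i\<in>{1..N}. k + 1 \<le> card (X \<inter> cball x r \<inter> cone_at (rho i) x))}"
  define Y where "Y = X \<inter> ecball x (2 * I)"
  have R: "knn_R k N rho X x = 2 * I"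
    unfolding knn_R_def I_def ..
  have "Y \<subseteq> X"
    by (simp add: Y_def)
  have "y \<in> X \<and> knn_adj k X x y \<longleftrightarrow> y \<in> Y \<and> knn_adj k Y x y" for y
  proof (cases "ereal (dist x y) \<le> I")
    case True
    then have "ereal (2 * dist x y) \<le> 2 * I"
      using ereal_mult_left_mono[OF True, of 2] by simp
    then have "ereal (dist x z) \<le> 2 * I" if "dist x z \<le> 2 * dist x y" for z
      using that by (meson ereal_less_eq(3) order.trans)
    then have near: "\<forall>z\<in>X. dist x z \<le> 2 * dist x y \<longrightarrow> z \<in> Y"
      by (simp add: Y_def ecball_def)
    show ?thesis
    proof (cases "y \<in> X")
      case True
      with near assms(4) have "x \<in> Y" "y \<in> Y" by auto
      then show ?thesis
        using knn_adj_restrict_iff[OF \<open>Y \<subseteq> X\<close> _ _ near] \<open>Y \<subseteq> X\<close> by blast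
    next
      case False
      with \<open>Y \<subseteq> X\<close> show ?thesis by blast
    qed
  next
    case False
    then obtain r where r: "\<forall>i\<in>{1..N}. k + 1 \<le> card (X \<inter> cball x r \<inter> cone_at (rho i) x)"
      and "r < dist x y"
      by (auto simp: I_def not_le Inf_less_iff)
    have "\<not> knn_adj k X x y"
      using not_knn_adj_beyond_cone_radius[OF assms(1-3) r subset_refl _ \<open>r < dist x y\<close>] by blast
    moreover have "\<not> knn_adj k Y x y" if "y \<in> Y"
    proof (rule not_knn_adj_beyond_cone_radius[OF assms(1-3) r \<open>Y \<subseteq> X\<close> _ \<open>r < dist x y\<close>])
      have "ereal (dist x y) \<le> 2 * I"
        using that by (simp add: Y_def ecball_def)
      then have "ereal (dist x z) \<le> 2 * I" if "dist x z < dist x y" for z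
        using that by (meson ereal_less_eq(3) less_imp_le order.trans)
      then show "\<forall>z\<in>X. dist x z < dist x y \<longrightarrow> z \<in> Y"
        by (simp add: Y_def ecball_def)
    qed
    ultimately show ?thesis by blast
  qed
  then have "{y \<in> X. knn_adj k X x y} = {y \<in> Y. knn_adj k Y x y}"
    by blast
  then show ?thesis
    by (simp add: knn_deg_def R Y_def)
qed

theorem lemma8p2:
  fixes k N :: nat and rho :: "nat \<Rightarrow> real^'n \<Rightarrow> real^'n"
    and X :: "(real^'n) set" and x :: "real^'n"
  assumes "k \<ge> 1"
    and "locally_finite_set X"
    and "\<forall>a\<in>X. inj_on (dist a) (X - {a})"
    and "\<forall>i\<in>{1..N}. is_rotation (rho i)"
    and "\<forall>y. (\<Union>i\<in>{1..N}. cone_at (rho i) y) = UNIV"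
    and "x \<in> X"
    and "infinite X \<or> k < card X"
  shows "knn_deg k X x = knn_deg k (X \<inter> ecball x (knn_R k N rho X x)) x
    \<and> k \<le> knn_deg k X x \<and> knn_deg k X x \<le> k * N"
proof -
  have upper: "finite {y \<in> X. knn_adj k X x y} \<and> knn_deg k X x \<le> k * N"
    using finite_knn_neighbours_card_le[OF assms(2) _ assms(4,5)] assms(3,6)
    by (simp add: knn_deg_def)
  have "{y. is_knn k X x y} \<subseteq> {y \<in> X. knn_adj k X x y}"
    by (auto simp: knn_adj_def is_knn_def)
  then have "k \<le> knn_deg k X x"
    using card_is_knn_ge[OF assms(2,6,7)] card_mono upper
    unfolding knn_deg_def by (meson order.trans)
  with upper show ?thesis
    using knn_deg_restrict_ecball_knn_R[OF assms(2,4,5,6)] by simp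
qed

end
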